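(* Let $G$ be a graph on $n$ vertices with $n>2$ even, and let $k=n/2$. Then the complement map $\mathfrak{c}$ of $F_k(G)$ does not belong to $\iota(\operatorname{Aut}(G))=\{\iota(\phi):\phi\in\operatorname{Aut}(G)\}$.
   Context: $F_k(G)$ is the graph on the $k$-subsets of $V(G)$ in which $A,B$ are adjacent iff $A\triangle B$ is an edge of $G$. For $\phi\in\operatorname{Aut}(G)$, $\iota(\phi)$ is the automorphism of $F_k(G)$ mapping $A$ to $\{\phi(v):v\in A\}$. The complement map $\mathfrak{c}$ sends each $k$-subset $A$ of $V(G)$ to $V(G)\setminus A$; when $k=n/2$ it is an automorphism of $F_k(G)$. *)

theory Defs
  imports Main
begin

definition simple_graph :: "'a set \<Rightarrow> ('a \<Rightarrow> 'a \<Rightarrow> bool) \<Rightarrow> bool" where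
  "simple_graph V E \<longleftrightarrow> finite V \<and> (\<forall>u v. E u v \<longrightarrow> u \<in> V \<and> v \<in> V)
     \<and> (\<forall>u v. E u v \<longrightarrow> E v u) \<and> (\<forall>v. \<not> E v v)"

definition graph_aut :: "'a set \<Rightarrow> ('a \<Rightarrow> 'a \<Rightarrow> bool) \<Rightarrow> ('a \<Rightarrow> 'a) set" where
  "graph_aut V E = {\<phi>. bij_betw \<phi> V V \<and> (\<forall>u\<in>V. \<forall>v\<in>V. E (\<phi> u) (\<phi> v) \<longleftrightarrow> E u v)}"

text \<open>Vertices of the k-token graph F_k(G): the k-subsets of V.\<close>

definition k_subsets :: "'a set \<Rightarrow> nat \<Rightarrow> 'a set set" where
  "k_subsets V k = {A. A \<subseteq> V \<and> card A = k}"

definition token_adj :: "('a \<Rightarrow> 'a \<Rightarrow> bool) \<Rightarrow> 'a set \<Rightarrow> 'a set \<Rightarrow> bool" where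
  "token_adj E A B \<longleftrightarrow> (\<exists>u v. E u v \<and> (A - B) \<union> (B - A) = {u, v})"

definition iota :: "('a \<Rightarrow> 'a) \<Rightarrow> 'a set \<Rightarrow> 'a set" where
  "iota \<phi> A = \<phi> ` A"

definition compl_map :: "'a set \<Rightarrow> 'a set \<Rightarrow> 'a set" where
  "compl_map V A = V - A"

end

theory Submission
  imports Defs
begin

text \<open>Neither the adjacency relation nor the parity of the order matters: any self-map
  \<open>\<phi>\<close> of \<open>V\<close> fails to send every \<open>k\<close>-subset to its complement once \<open>2 \<le> k\<close>.
  Choose a \<open>k\<close>-subset \<open>A\<close> containing some vertex \<open>x\<close> together with \<open>\<phi> x\<close>;
  then \<open>\<phi> x\<close> lies in both \<open>A\<close> and \<open>\<phi> ` A\<close>.\<close>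

lemma k_subset_meets_image:
  assumes "finite V" and "\<phi> ` V \<subseteq> V" and "2 \<le> k" and "k \<le> card V"
  obtains A where "A \<in> k_subsets V k" and "\<phi> ` A \<inter> A \<noteq> {}"
proof -
  obtain x where x: "x \<in> V"
    using assms(3,4) by fastforce
  have "{x, \<phi> x} \<subseteq> V" and "card {x, \<phi> x} \<le> k"
    using x assms(2,3) by (auto simp: card_insert_le_m1)
  then obtain A where "{x, \<phi> x} \<subseteq> A" and "A \<subseteq> V" and "card A = k"
    using exists_subset_between assms(1,4) by metis
  then show thesis
    using that[of A] by (auto simp: k_subsets_def)
qed

theorem proposition6:
  fixes V :: "'a set" and E :: "'a \<Rightarrow> 'a \<Rightarrow> bool" and k :: nat
  assumes "simple_graph V E"
    and "card V > 2" and "even (card V)"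
    and "k = card V div 2"
  shows "\<not> (\<exists>\<phi>\<in>graph_aut V E. \<forall>A\<in>k_subsets V k. iota \<phi> A = compl_map V A)"
proof
  assume "\<exists>\<phi>\<in>graph_aut V E. \<forall>A\<in>k_subsets V k. iota \<phi> A = compl_map V A"
  then obtain \<phi> where "bij_betw \<phi> V V" and complement: "\<And>A. A \<in> k_subsets V k \<Longrightarrow> \<phi> ` A = V - A"
    unfolding graph_aut_def iota_def compl_map_def by auto
  then have "\<phi> ` V \<subseteq> V"
    by (simp add: bij_betw_def)
  moreover have "finite V"
    using assms(1) by (simp add: simple_graph_def)
  moreover have "2 \<le> k" and "k \<le> card V"
    using assms(2-4) by auto
  ultimately obtain A where "A \<in> k_subsets V k" and "\<phi> ` A \<inter> A \<noteq> {}"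
    using k_subset_meets_image by metis
  then show False
    using complement by auto
qed

end
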